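(* Let $N\in\mathbb{N}$, $\gamma_1,\dots,\gamma_N\ge 0$, and let $\Phi_1,\dots,\Phi_N$ be independent random variables where $\Phi_i$ has the law of $Y_i\bmod 2\pi$ with $Y_i\sim\mathcal{N}(0,\gamma_i)$. For $\mathcal{S}\subseteq\{1,\dots,N\}$ let $\overline{G}(\mathcal{S}):=\sum_{i\in\mathcal{S}}\sum_{j\in\mathcal{S}}\cos(\Phi_i-\Phi_j)$. Then for any $\mathcal{S}\subseteq\mathcal{S}'\subseteq\{1,\dots,N\}$, $$\mathbb{E}\big[\overline{G}(\mathcal{S})\big]\le\mathbb{E}\big[\overline{G}(\mathcal{S}')\big].$$
   Context: $\overline{G}(\mathcal{S})$ is the beamforming gain of the subset $\mathcal{S}$ of agents; $\gamma_i$ is the effective localization error of agent $i$ and $\Phi_i$ its (wrapped normal) total phase. *)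

theory Defs
  imports "HOL-Probability.Probability"
begin

definition gaussian_measure :: "real \<Rightarrow> real measure" where
  "gaussian_measure v =
     (if v = 0 then return borel 0 else density lborel (normal_density 0 (sqrt v)))"

definition wrap2pi :: "real \<Rightarrow> real" where
  "wrap2pi y = y - 2 * pi * of_int \<lfloor>y / (2 * pi)\<rfloor>"

definition wrapped_normal :: "real \<Rightarrow> real measure" where
  "wrapped_normal v = distr (gaussian_measure v) borel wrap2pi"

definition Gbar :: "(nat \<Rightarrow> 'a \<Rightarrow> real) \<Rightarrow> nat set \<Rightarrow> 'a \<Rightarrow> real" where
  "Gbar \<Phi> S \<omega> = (\<Sum>i\<in>S. \<Sum>j\<in>S. cos (\<Phi> i \<omega> - \<Phi> j \<omega>))"

end

theory Submission
  imports Defs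
begin

text \<open>For independent phases, \<open>E cos (\<Phi>\<^sub>i - \<Phi>\<^sub>j) = E cos \<Phi>\<^sub>i E cos \<Phi>\<^sub>j + E sin \<Phi>\<^sub>i E sin \<Phi>\<^sub>j\<close>.
  Wrapping modulo \<open>2\<pi>\<close> does not change sine and cosine, so these are the real and imaginary
  parts of the characteristic function \<open>exp (- \<gamma>\<^sub>i / 2)\<close> of \<open>N(0, \<gamma>\<^sub>i)\<close> at 1; hence every
  term \<open>E cos (\<Phi>\<^sub>i - \<Phi>\<^sub>j)\<close> of the expected gain equals \<open>exp (- (\<gamma>\<^sub>i + \<gamma>\<^sub>j) / 2)\<close> for
  \<open>i \<noteq> j\<close> and 1 for \<open>i = j\<close>. A double sum of non-negative terms grows with its index set.\<close>

lemma (in prob_space) indep_var_of_indep_vars: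
  assumes "indep_vars M' X I" "i \<in> I" "j \<in> I" "i \<noteq> j"
  shows "indep_var (M' i) (X i) (M' j) (X j)"
proof -
  have "indep_var (M' i) ((\<lambda>f. f i) \<circ> (\<lambda>\<omega>. restrict (\<lambda>k. X k \<omega>) {i}))
                  (M' j) ((\<lambda>f. f j) \<circ> (\<lambda>\<omega>. restrict (\<lambda>k. X k \<omega>) {j}))"
    using assms by (intro indep_var_compose[OF indep_var_restrict[OF assms(1)]]) auto
  then show ?thesis
    by (simp add: comp_def)
qed

lemma sets_gaussian_measure [measurable_cong]: "sets (gaussian_measure v) = sets borel"
  by (simp add: gaussian_measure_def)

lemma prob_space_gaussian_measure: "0 \<le> v \<Longrightarrow> prob_space (gaussian_measure v)"
  by (auto simp: gaussian_measure_def prob_space_return intro!: prob_space_normal_density)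

lemma gaussian_measure_eq_distr_std_normal:
  assumes "0 < v"
  shows "gaussian_measure v = distr std_normal_distribution lborel (\<lambda>x. sqrt v * x)"
proof -
  interpret std: prob_space std_normal_distribution
    by (rule prob_space_normal_density) simp
  have "distributed std_normal_distribution lborel (\<lambda>x. x) std_normal_density"
    by (auto simp: distributed_def distr_id2)
  from std.normal_density_affine[OF this, of "sqrt v" 0]
  have "distributed std_normal_distribution lborel (\<lambda>x. sqrt v * x) (normal_density 0 (sqrt v))"
    using assms by simp
  then show ?thesis
    using assms by (simp add: gaussian_measure_def distributed_distr_eq_density)
qed

lemma char_gaussian_measure:
  assumes "0 \<le> v"
  shows "char (gaussian_measure v) t = exp (- v * t\<^sup>2 / 2)"
proof (cases "v = 0")
  case True
  then show ?thesis
    by (simp add: gaussian_measure_def char_def integral_return)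
next
  case False
  with assms have "0 < v" by simp
  then have "char (gaussian_measure v) t = char std_normal_distribution (t * sqrt v)"
    by (simp add: gaussian_measure_eq_distr_std_normal char_def integral_distr mult.assoc)
  also have "\<dots> = exp (- v * t\<^sup>2 / 2)"
    using assms by (simp add: char_std_normal_distribution power_mult_distrib)
  finally show ?thesis .
qed

lemma
  assumes "0 \<le> v"
  shows integral_gaussian_measure_cos: "(\<integral>x. cos x \<partial>gaussian_measure v) = exp (- v / 2)"
    and integral_gaussian_measure_sin: "(\<integral>x. sin x \<partial>gaussian_measure v) = 0"
proof -
  interpret prob_space "gaussian_measure v"
    using assms by (rule prob_space_gaussian_measure)
  have int: "integrable (gaussian_measure v) (\<lambda>x. iexp (1 * x))"
    by (rule integrable_iexp) (auto simp: sets_gaussian_measure)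
  have "(\<integral>x. cos x \<partial>gaussian_measure v) = Re (char (gaussian_measure v) 1)"
    unfolding char_def by (subst integral_Re[OF int, symmetric]) (simp add: Re_exp)
  then show "(\<integral>x. cos x \<partial>gaussian_measure v) = exp (- v / 2)"
    using assms by (simp add: char_gaussian_measure)
  have "(\<integral>x. sin x \<partial>gaussian_measure v) = Im (char (gaussian_measure v) 1)"
    unfolding char_def by (subst integral_Im[OF int, symmetric]) (simp add: Im_exp)
  then show "(\<integral>x. sin x \<partial>gaussian_measure v) = 0"
    using assms by (simp add: char_gaussian_measure)
qed

lemma cos_wrap2pi [simp]: "cos (wrap2pi y) = cos y"
  and sin_wrap2pi [simp]: "sin (wrap2pi y) = sin y"
  unfolding wrap2pi_def by (metis diff_add_cancel sin_cos_eq_iff)+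

lemma wrap2pi_measurable [measurable]: "wrap2pi \<in> borel_measurable borel"
  unfolding wrap2pi_def by measurable

lemma integral_wrapped_normal:
  fixes f :: "real \<Rightarrow> real"
  assumes "f \<in> borel_measurable borel"
  shows "(\<integral>x. f x \<partial>wrapped_normal v) = (\<integral>x. f (wrap2pi x) \<partial>gaussian_measure v)"
  unfolding wrapped_normal_def using assms by (simp add: integral_distr)

lemma
  assumes "0 \<le> v"
  shows integral_wrapped_normal_cos: "(\<integral>x. cos x \<partial>wrapped_normal v) = exp (- v / 2)"
    and integral_wrapped_normal_sin: "(\<integral>x. sin x \<partial>wrapped_normal v) = 0"
  using assms by (simp_all add: integral_wrapped_normal
      integral_gaussian_measure_cos integral_gaussian_measure_sin)

lemma (in prob_space) expectation_cos_diff_indep: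
  fixes X Y :: "'a \<Rightarrow> real"
  assumes indep: "indep_var borel X borel Y"
  shows "expectation (\<lambda>\<omega>. cos (X \<omega> - Y \<omega>)) =
    expectation (\<lambda>\<omega>. cos (X \<omega>)) * expectation (\<lambda>\<omega>. cos (Y \<omega>)) +
    expectation (\<lambda>\<omega>. sin (X \<omega>)) * expectation (\<lambda>\<omega>. sin (Y \<omega>))"
proof -
  have [measurable]: "random_variable borel X" "random_variable borel Y"
    using indep by (auto elim: indep_var_rv1 indep_var_rv2)
  have int: "integrable M (\<lambda>\<omega>. f (Z \<omega>))"
    if "f \<in> borel_measurable borel" "\<And>x. \<bar>f x\<bar> \<le> 1" "random_variable borel Z"
    for f :: "real \<Rightarrow> real" and Z
    using that by (intro integrable_const_bound[where B=1]) (auto simp: measurable_compose)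
  have indep_comp: "indep_var borel (\<lambda>\<omega>. f (X \<omega>)) borel (\<lambda>\<omega>. f (Y \<omega>))"
    if "f \<in> borel_measurable borel" for f :: "real \<Rightarrow> real"
    using indep_var_compose[OF indep that that] by (simp add: comp_def)
  note product = indep_var_lebesgue_integral indep_var_integrable
  have "expectation (\<lambda>\<omega>. cos (X \<omega> - Y \<omega>)) =
      expectation (\<lambda>\<omega>. cos (X \<omega>) * cos (Y \<omega>) + sin (X \<omega>) * sin (Y \<omega>))"
    by (simp add: cos_diff)
  also have "\<dots> = expectation (\<lambda>\<omega>. cos (X \<omega>) * cos (Y \<omega>)) +
      expectation (\<lambda>\<omega>. sin (X \<omega>) * sin (Y \<omega>))"
    by (intro Bochner_Integration.integral_add product(2) indep_comp int) auto
  also have "\<dots> = expectation (\<lambda>\<omega>. cos (X \<omega>)) * expectation (\<lambda>\<omega>. cos (Y \<omega>)) +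
      expectation (\<lambda>\<omega>. sin (X \<omega>)) * expectation (\<lambda>\<omega>. sin (Y \<omega>))"
    by (intro arg_cong2[where f="(+)"] product(1) indep_comp int) auto
  finally show ?thesis .
qed

lemma (in prob_space) expectation_cos_diff_wrapped_normal:
  assumes "indep_var borel X borel Y" "0 \<le> v" "0 \<le> w"
    and "distr M borel X = wrapped_normal v" "distr M borel Y = wrapped_normal w"
  shows "expectation (\<lambda>\<omega>. cos (X \<omega> - Y \<omega>)) = exp (- (v + w) / 2)"
proof -
  have [measurable]: "random_variable borel X" "random_variable borel Y"
    using assms(1) by (auto elim: indep_var_rv1 indep_var_rv2)
  have "expectation (\<lambda>\<omega>. f (Z \<omega>)) = (\<integral>x. f x \<partial>distr M borel Z)"
    if "f \<in> borel_measurable borel" "random_variable borel Z" for f :: "real \<Rightarrow> real" and Z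
    using that by (simp add: integral_distr)
  then show ?thesis
    using assms by (simp add: expectation_cos_diff_indep integral_wrapped_normal_cos
        integral_wrapped_normal_sin flip: exp_add)
qed

lemma (in finite_measure) integral_Gbar:
  assumes "finite S" and [measurable]: "\<And>i. i \<in> S \<Longrightarrow> \<Phi> i \<in> borel_measurable M"
  shows "(\<integral>\<omega>. Gbar \<Phi> S \<omega> \<partial>M) = (\<Sum>i\<in>S. \<Sum>j\<in>S. \<integral>\<omega>. cos (\<Phi> i \<omega> - \<Phi> j \<omega>) \<partial>M)"
proof -
  have int: "integrable M (\<lambda>\<omega>. cos (\<Phi> i \<omega> - \<Phi> j \<omega>))" if "i \<in> S" "j \<in> S" for i j
    using that by (intro integrable_const_bound[where B=1]) auto
  show ?thesis
    unfolding Gbar_def using int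
    by (simp add: Bochner_Integration.integral_sum)
qed

lemma double_sum_mono2:
  fixes e :: "'a \<Rightarrow> 'a \<Rightarrow> 'b :: ordered_comm_monoid_add"
  assumes "finite B" "A \<subseteq> B" "\<And>i j. i \<in> B \<Longrightarrow> j \<in> B \<Longrightarrow> 0 \<le> e i j"
  shows "(\<Sum>i\<in>A. \<Sum>j\<in>A. e i j) \<le> (\<Sum>i\<in>B. \<Sum>j\<in>B. e i j)"
proof -
  have "finite A" using assms finite_subset by blast
  have "(\<Sum>(i, j)\<in>A \<times> A. e i j) \<le> (\<Sum>(i, j)\<in>B \<times> B. e i j)"
    using assms by (intro sum_mono2) auto
  then show ?thesis
    using \<open>finite A\<close> \<open>finite B\<close> by (simp add: sum.cartesian_product)
qed

theorem proposition2:
  fixes M :: "'a measure" and \<Phi> :: "nat \<Rightarrow> 'a \<Rightarrow> real" and \<gamma> :: "nat \<Rightarrow> real"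
    and N :: nat and S S' :: "nat set"
  assumes "prob_space M"
    and "\<forall>i\<in>{1..N}. \<gamma> i \<ge> 0"
    and "prob_space.indep_vars M (\<lambda>_. borel) \<Phi> {1..N}"
    and "\<forall>i\<in>{1..N}. distr M borel (\<Phi> i) = wrapped_normal (\<gamma> i)"
    and "S \<subseteq> S'" and "S' \<subseteq> {1..N}"
  shows "prob_space.expectation M (Gbar \<Phi> S) \<le> prob_space.expectation M (Gbar \<Phi> S')"
proof -
  interpret prob_space M by fact
  have rv: "random_variable borel (\<Phi> i)" if "i \<in> {1..N}" for i
    using assms(3) that by (simp add: indep_vars_def)
  have nonneg: "0 \<le> expectation (\<lambda>\<omega>. cos (\<Phi> i \<omega> - \<Phi> j \<omega>))"
    if "i \<in> {1..N}" "j \<in> {1..N}" for i j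
  proof (cases "i = j")
    case False
    then have "expectation (\<lambda>\<omega>. cos (\<Phi> i \<omega> - \<Phi> j \<omega>)) = exp (- (\<gamma> i + \<gamma> j) / 2)"
      using that assms(2,4)
      by (intro expectation_cos_diff_wrapped_normal indep_var_of_indep_vars[OF assms(3)]) auto
    then show ?thesis
      by simp
  qed (simp add: prob_space)
  have "finite S'" "finite S"
    using assms(5,6) by (auto intro: finite_subset)
  then show ?thesis
    using assms(5,6) rv nonneg by (simp add: integral_Gbar subset_iff double_sum_mono2)
qed

end
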